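(* Let $X$ be a compact antipodal metric space. Then $\mathrm{rad}(\mathbf{E}(X))=\frac{\mathrm{diam}(X)}{2}$, and the constant function $f_0\equiv\frac{\mathrm{diam}(X)}{2}$ is the unique center of $\mathbf{E}(X)$.
   Context: A metric space $X$ is antipodal if for every $x\in X$ there exists $\bar x\in X$ with $d_X(x,\bar x)=d_X(x,y)+d_X(y,\bar x)$ for all $y\in X$. For a metric space $X$, $\Delta(X)=\{f:X\to\mathbb{R}\text{ bounded}:f(x)+f(x')\ge d_X(x,x')\}$ and the tight span $\mathbf{E}(X)$ is the set of pointwise-minimal elements of $\Delta(X)$ with the sup-norm metric. For a bounded metric space $Y$, $\mathrm{rad}(Y)=\inf_{x\in Y}\sup_{y\in Y}d_Y(x,y)$, and $x_0\in Y$ is a center if $\sup_{y\in Y}d_Y(x_0,y)=\mathrm{rad}(Y)$. *)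

theory Defs
  imports "HOL-Analysis.Analysis"
begin

text \<open>Functions X -> real are modelled as functions 'a => real
  which vanish outside X (extensional convention).\<close>

definition antipodal :: "'a::metric_space set \<Rightarrow> bool" where
  "antipodal X \<longleftrightarrow>
     (\<forall>x\<in>X. \<exists>x'\<in>X. \<forall>y\<in>X. dist x x' = dist x y + dist y x')"

definition Delta :: "'a::metric_space set \<Rightarrow> ('a \<Rightarrow> real) set" where
  "Delta X = {f. (\<forall>x. x \<notin> X \<longrightarrow> f x = 0) \<and> bounded (f ` X) \<and>
                 (\<forall>x\<in>X. \<forall>x'\<in>X. f x + f x' \<ge> dist x x')}"

definition tight_span :: "'a::metric_space set \<Rightarrow> ('a \<Rightarrow> real) set" where
  "tight_span X = {f \<in> Delta X. \<forall>g\<in>Delta X. (\<forall>x\<in>X. g x \<le> f x) \<longrightarrow> (\<forall>x\<in>X. g x = f x)}"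

definition supdist :: "'a set \<Rightarrow> ('a \<Rightarrow> real) \<Rightarrow> ('a \<Rightarrow> real) \<Rightarrow> real" where
  "supdist X f g = (SUP x\<in>X. \<bar>f x - g x\<bar>)"

definition rad :: "'b set \<Rightarrow> ('b \<Rightarrow> 'b \<Rightarrow> real) \<Rightarrow> real" where
  "rad Y d = (INF x\<in>Y. SUP y\<in>Y. d x y)"

definition is_center :: "'b set \<Rightarrow> ('b \<Rightarrow> 'b \<Rightarrow> real) \<Rightarrow> 'b \<Rightarrow> bool" where
  "is_center Y d x0 \<longleftrightarrow> x0 \<in> Y \<and> (SUP y\<in>Y. d x0 y) = rad Y d"

end

theory Submission
  imports Defs
begin

text \<open>In an antipodal space every point x and its antipode x' realise the diameter D, so each
  f in the tight span satisfies f x + f x' \<ge> D; minimality moreover gives 0 \<le> f \<le> D.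
  Comparing f with the point y \<mapsto> dist x y of E(X) shows that the eccentricity of f is at
  least sup f \<ge> D/2, with equality only if f is constantly D/2. Conversely the constant D/2
  lies in E(X) and is within D/2 of every f.\<close>

definition antipode :: "'a::metric_space set \<Rightarrow> 'a \<Rightarrow> 'a \<Rightarrow> bool" where
  "antipode X x x' \<longleftrightarrow> x' \<in> X \<and> (\<forall>y\<in>X. dist x x' = dist x y + dist y x')"

lemma antipodal_iff_antipode: "antipodal X \<longleftrightarrow> (\<forall>x\<in>X. \<exists>x'. antipode X x x')"
  unfolding antipodal_def antipode_def by blast

lemma antipode_in: "antipode X x x' \<Longrightarrow> x' \<in> X"
  unfolding antipode_def by blast

lemma antipode_dist_through: "antipode X x x' \<Longrightarrow> y \<in> X \<Longrightarrow> dist x x' = dist x y + dist y x'"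
  unfolding antipode_def by blast

lemma antipode_dist_eq:
  assumes "antipode X x x'" "antipode X y y'" "x \<in> X" "y \<in> X"
  shows "dist x x' = dist y y'"
proof -
  have "dist x x' = dist x y + dist y x'" "dist x x' = dist x y' + dist y' x'"
       "dist y y' = dist y x + dist x y'" "dist y y' = dist y x' + dist x' y'"
    using assms antipode_dist_through antipode_in by blast+
  then show ?thesis
    using dist_commute[of x y] dist_commute[of y' x'] by linarith
qed

lemma dist_le_antipode_dist:
  assumes "antipodal X" "antipode X x x'" "x \<in> X" "y \<in> X" "z \<in> X"
  shows "dist y z \<le> dist x x'"
proof -
  obtain y' where y': "antipode X y y'"
    using assms(1,4) antipodal_iff_antipode by blast
  have "dist y z \<le> dist y z + dist z y'"
    by simp
  also have "\<dots> = dist y y'"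
    using antipode_dist_through[OF y' \<open>z \<in> X\<close>] by simp
  also have "\<dots> = dist x x'"
    using antipode_dist_eq[OF assms(2) y' assms(3,4)] by simp
  finally show ?thesis .
qed

lemma antipode_dist_eq_diameter:
  assumes "compact X" "antipodal X" "antipode X x x'" "x \<in> X"
  shows "dist x x' = diameter X"
proof (rule antisym)
  show "dist x x' \<le> diameter X"
    using assms(4) antipode_in[OF assms(3)] compact_imp_bounded[OF assms(1)] diameter_bounded_bound
    by blast
  obtain y z where "y \<in> X" "z \<in> X" "dist y z = diameter X"
    using diameter_compact_attained[OF assms(1)] assms(4) by blast
  then show "diameter X \<le> dist x x'"
    using dist_le_antipode_dist[OF assms(2,3,4)] by metis
qed

lemma Delta_dist_le: "f \<in> Delta X \<Longrightarrow> x \<in> X \<Longrightarrow> y \<in> X \<Longrightarrow> dist x y \<le> f x + f y"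
  unfolding Delta_def by blast

lemma Delta_outside: "f \<in> Delta X \<Longrightarrow> x \<notin> X \<Longrightarrow> f x = 0"
  unfolding Delta_def by blast

lemma Delta_nonneg: "f \<in> Delta X \<Longrightarrow> x \<in> X \<Longrightarrow> 0 \<le> f x"
  using Delta_dist_le[of f X x x] by simp

lemma Delta_update_diameter:
  assumes "bounded X" "f \<in> Delta X" "x \<in> X"
  shows "f(x := diameter X) \<in> Delta X"
  unfolding Delta_def
proof (intro CollectI conjI ballI allI impI)
  show "(f(x := diameter X)) y = 0" if "y \<notin> X" for y
    using that assms(2,3) Delta_outside by auto
  have "bounded (insert (diameter X) (f ` X))"
    using assms(2) unfolding Delta_def by auto
  then show "bounded (f(x := diameter X) ` X)"
    by (rule bounded_subset) auto
  show "dist y z \<le> (f(x := diameter X)) y + (f(x := diameter X)) z" if "y \<in> X" "z \<in> X" for y z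
    using that diameter_bounded_bound[OF assms(1)] diameter_ge_0[OF assms(1)]
      Delta_nonneg[OF assms(2)] Delta_dist_le[OF assms(2)]
    by (cases "y = x"; cases "z = x") (auto intro: add_increasing add_increasing2)
qed

lemma tight_span_Delta: "f \<in> tight_span X \<Longrightarrow> f \<in> Delta X"
  unfolding tight_span_def by blast

lemma tight_span_minimal:
  "f \<in> tight_span X \<Longrightarrow> g \<in> Delta X \<Longrightarrow> (\<And>y. y \<in> X \<Longrightarrow> g y \<le> f y) \<Longrightarrow> x \<in> X \<Longrightarrow> g x = f x"
  unfolding tight_span_def by blast

lemma tight_span_le_diameter:
  assumes "bounded X" "f \<in> tight_span X" "x \<in> X"
  shows "f x \<le> diameter X"
proof (rule ccontr)
  assume "\<not> f x \<le> diameter X"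
  then have "(f(x := diameter X)) y \<le> f y" for y
    by simp
  then have "(f(x := diameter X)) x = f x"
    using tight_span_minimal[OF assms(2) Delta_update_diameter[OF assms(1) tight_span_Delta[OF assms(2)]]]
      assms(3) by blast
  with \<open>\<not> f x \<le> diameter X\<close> show False
    by simp
qed

definition dist_from :: "'a::metric_space set \<Rightarrow> 'a \<Rightarrow> 'a \<Rightarrow> real" where
  "dist_from X x = (\<lambda>y. if y \<in> X then dist x y else 0)"

lemma dist_from_in_tight_span:
  assumes "bounded X" "x \<in> X"
  shows "dist_from X x \<in> tight_span X"
  unfolding tight_span_def
proof (intro CollectI conjI ballI impI)
  show "dist_from X x \<in> Delta X"
    unfolding Delta_def dist_from_def
    using assms diameter_bounded_bound
    by (auto simp: bounded_real dist_triangle3 intro!: exI[of _ "diameter X"])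
  fix g y assume g: "g \<in> Delta X" and le: "\<forall>y\<in>X. g y \<le> dist_from X x y" and "y \<in> X"
  have "g x = 0"
    using le Delta_nonneg[OF g] assms(2) by (fastforce simp: dist_from_def)
  then have "dist x y \<le> g y"
    using Delta_dist_le[OF g assms(2) \<open>y \<in> X\<close>] by simp
  then show "g y = dist_from X x y"
    using le \<open>y \<in> X\<close> by (fastforce simp: dist_from_def)
qed

lemma supdist_ge:
  assumes "f \<in> Delta X" "g \<in> Delta X" "y \<in> X"
  shows "\<bar>f y - g y\<bar> \<le> supdist X f g"
proof -
  obtain a b where "\<forall>z\<in>f ` X. \<bar>z\<bar> \<le> a" "\<forall>z\<in>g ` X. \<bar>z\<bar> \<le> b"
    using assms(1,2) unfolding Delta_def bounded_real by (elim CollectE conjE exE) (intro that)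
  then have "\<bar>f z - g z\<bar> \<le> a + b" if "z \<in> X" for z
    using that abs_triangle_ineq4[of "f z" "g z"] by fastforce
  then have "bdd_above ((\<lambda>z. \<bar>f z - g z\<bar>) ` X)"
    by (intro bdd_aboveI2) blast
  then show ?thesis
    unfolding supdist_def using assms(3) by (rule cSUP_upper2) simp
qed

lemma supdist_le: "X \<noteq> {} \<Longrightarrow> (\<And>y. y \<in> X \<Longrightarrow> \<bar>f y - g y\<bar> \<le> r) \<Longrightarrow> supdist X f g \<le> r"
  unfolding supdist_def by (rule cSUP_least)

lemma tight_span_supdist_le_diameter:
  assumes "bounded X" "X \<noteq> {}" "f \<in> tight_span X" "g \<in> tight_span X"
  shows "supdist X f g \<le> diameter X"
proof (rule supdist_le[OF assms(2)])
  fix y assume "y \<in> X"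
  then show "\<bar>f y - g y\<bar> \<le> diameter X"
    using assms tight_span_le_diameter Delta_nonneg tight_span_Delta
    by (smt (verit, best))
qed

definition eccentricity :: "'b set \<Rightarrow> ('b \<Rightarrow> 'b \<Rightarrow> real) \<Rightarrow> 'b \<Rightarrow> real" where
  "eccentricity Y d x = (SUP y\<in>Y. d x y)"

lemma rad_and_centers_of_unique_minimizer:
  assumes "x0 \<in> Y" "eccentricity Y d x0 = r"
    and "\<And>x. x \<in> Y \<Longrightarrow> x \<noteq> x0 \<Longrightarrow> r < eccentricity Y d x"
  shows "rad Y d = r" and "is_center Y d x \<longleftrightarrow> x = x0"
proof -
  have "(INF x\<in>Y. eccentricity Y d x) = r"
    using assms by (intro cInf_eq_minimum) (auto intro: less_imp_le)
  then show rad: "rad Y d = r"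
    unfolding rad_def eccentricity_def by simp
  show "is_center Y d x \<longleftrightarrow> x = x0"
    using assms unfolding is_center_def rad eccentricity_def[symmetric] by fastforce
qed

lemma tight_span_le_eccentricity:
  assumes "bounded X" "f \<in> tight_span X" "x \<in> X"
  shows "f x \<le> eccentricity (tight_span X) (supdist X) f"
proof -
  let ?dx = "dist_from X x"
  have dx: "?dx \<in> tight_span X"
    using dist_from_in_tight_span[OF assms(1,3)] .
  have "f x = \<bar>f x - ?dx x\<bar>"
    using Delta_nonneg[OF tight_span_Delta[OF assms(2)] assms(3)] by (simp add: dist_from_def)
  also have "\<dots> \<le> supdist X f ?dx"
    using supdist_ge[OF tight_span_Delta[OF assms(2)] tight_span_Delta[OF dx] assms(3)] .
  also have "\<dots> \<le> eccentricity (tight_span X) (supdist X) f"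
    unfolding eccentricity_def
    using tight_span_supdist_le_diameter[OF assms(1) _ assms(2)] assms(3) dx
    by (intro cSUP_upper bdd_aboveI2) auto
  finally show ?thesis .
qed

lemma Delta_antipode_sum_ge:
  assumes "compact X" "antipodal X" "f \<in> Delta X" "antipode X x x'" "x \<in> X"
  shows "diameter X \<le> f x + f x'"
  using Delta_dist_le[OF assms(3,5) antipode_in[OF assms(4)]]
    antipode_dist_eq_diameter[OF assms(1,2,4,5)] by simp

lemma half_diameter_in_tight_span:
  assumes "compact X" "antipodal X"
  shows "(\<lambda>x. if x \<in> X then diameter X / 2 else 0) \<in> tight_span X" (is "?f0 \<in> _")
  unfolding tight_span_def
proof (intro CollectI conjI ballI impI)
  show "?f0 \<in> Delta X"
    unfolding Delta_def
    using diameter_bounded_bound[OF compact_imp_bounded[OF assms(1)]]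
    by (auto simp: bounded_real intro!: exI[of _ "\<bar>diameter X / 2\<bar>"])
  fix g x assume g: "g \<in> Delta X" and le: "\<forall>x\<in>X. g x \<le> ?f0 x" and "x \<in> X"
  obtain x' where x': "antipode X x x'"
    using assms(2) \<open>x \<in> X\<close> antipodal_iff_antipode by blast
  have "x' \<in> X"
    using antipode_in[OF x'] .
  have "g x \<le> diameter X / 2" "g x' \<le> diameter X / 2"
    using le \<open>x \<in> X\<close> \<open>x' \<in> X\<close> by auto
  then show "g x = ?f0 x"
    using Delta_antipode_sum_ge[OF assms g x' \<open>x \<in> X\<close>] \<open>x \<in> X\<close> by simp
qed

lemma tight_span_eccentricity_gt_half_diameter:
  assumes "compact X" "antipodal X" "f \<in> tight_span X"
    and "f \<noteq> (\<lambda>x. if x \<in> X then diameter X / 2 else 0)"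
  shows "diameter X / 2 < eccentricity (tight_span X) (supdist X) f"
proof -
  obtain x where "x \<in> X" "f x \<noteq> diameter X / 2"
    using assms(4) Delta_outside[OF tight_span_Delta[OF assms(3)]] by force
  obtain x' where x': "antipode X x x'"
    using assms(2) \<open>x \<in> X\<close> antipodal_iff_antipode by blast
  have "x' \<in> X"
    using antipode_in[OF x'] .
  have "diameter X / 2 < f x \<or> diameter X / 2 < f x'"
    using Delta_antipode_sum_ge[OF assms(1,2) tight_span_Delta[OF assms(3)] x' \<open>x \<in> X\<close>]
      \<open>f x \<noteq> diameter X / 2\<close> by linarith
  then show ?thesis
    using tight_span_le_eccentricity[OF compact_imp_bounded[OF assms(1)] assms(3)]
      \<open>x \<in> X\<close> \<open>x' \<in> X\<close> by fastforce
qed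

lemma supdist_half_diameter_le:
  assumes "bounded X" "X \<noteq> {}" "g \<in> tight_span X"
  shows "supdist X (\<lambda>x. if x \<in> X then diameter X / 2 else 0) g \<le> diameter X / 2"
proof (rule supdist_le[OF assms(2)])
  fix y assume "y \<in> X"
  then have "0 \<le> g y" "g y \<le> diameter X"
    using tight_span_le_diameter[OF assms(1,3)] Delta_nonneg[OF tight_span_Delta[OF assms(3)]] by auto
  with \<open>y \<in> X\<close> show "\<bar>(if y \<in> X then diameter X / 2 else 0) - g y\<bar> \<le> diameter X / 2"
    unfolding if_P[OF \<open>y \<in> X\<close>] abs_le_iff by linarith
qed

lemma eccentricity_half_diameter:
  assumes "X \<noteq> {}" "compact X" "antipodal X"
  shows "eccentricity (tight_span X) (supdist X) (\<lambda>x. if x \<in> X then diameter X / 2 else 0)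
    = diameter X / 2" (is "eccentricity _ _ ?f0 = _")
proof (rule antisym)
  have f0: "?f0 \<in> tight_span X"
    using half_diameter_in_tight_span[OF assms(2,3)] .
  then show "eccentricity (tight_span X) (supdist X) ?f0 \<le> diameter X / 2"
    unfolding eccentricity_def
    using supdist_half_diameter_le[OF compact_imp_bounded[OF assms(2)] assms(1)]
    by (intro cSUP_least) auto
  obtain x where "x \<in> X"
    using assms(1) by blast
  then show "diameter X / 2 \<le> eccentricity (tight_span X) (supdist X) ?f0"
    using tight_span_le_eccentricity[OF compact_imp_bounded[OF assms(2)] f0] by force
qed

theorem proposition2p25:
  fixes X :: "'a::metric_space set"
  assumes "X \<noteq> {}" and "compact X" and "antipodal X"
  shows "rad (tight_span X) (supdist X) = diameter X / 2 \<and>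
         (\<forall>f. is_center (tight_span X) (supdist X) f \<longleftrightarrow>
              f = (\<lambda>x. if x \<in> X then diameter X / 2 else 0))"
  using rad_and_centers_of_unique_minimizer[OF half_diameter_in_tight_span[OF assms(2,3)]
      eccentricity_half_diameter[OF assms] tight_span_eccentricity_gt_half_diameter[OF assms(2,3)]]
  by blast

end
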